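(* In the content-oblivious BFS algorithm $\mathcal{A}$ run with root $r$ on a connected graph $G$, for every $k\ge1$ such that the root performs at least $k$ invocations of Explore, the following hold at the end of the root's $k$-th invocation of Explore, regardless of message delays, delivery order and contents: - every node at distance exactly $k$ from $r$ has set its parent to a neighbour at distance $k-1$ from $r$, and has left state $\mathsf{INIT}$; - every node at distance greater than $k$ from $r$ is still in state $\mathsf{INIT}$.
   Context: Asynchronous model: there are no timing assumptions, and messages are not necessarily delivered in FIFO order. A node is asleep until it receives a message. On receiving one, it performs local computation, sends zero or more messages to neighbours, and goes back to sleep. Each node knows $n$ and its neighbour set $\mathcal{N}_u$. Algorithm $\mathcal{A}$ (content-oblivious BFS). Nodes ignore the contents of all messages; decisions depend only on from which neighbour a message arrives. Every node $u$ has variables $\mathrm{state}_u\in\{\mathsf{INIT},\mathsf{IDLE},\mathsf{EXPLORE},\mathsf{DONE}\}$, $\mathrm{parent}_u$, $\mathrm{children}_u$ and $\mathrm{count}_u$. All nodes start in $\mathsf{INIT}$. The root $r$ sets $\mathrm{parent}_r=\bot$, $\mathrm{children}_r=\mathcal{N}_r$, $\mathrm{count}_r=0$ and $\mathrm{state}_r=\mathsf{IDLE}$. It then repeatedly invokes Explore until $\mathrm{state}_r=\mathsf{DONE}$. The nodes handle incoming messages as follows. (i) SetParent: a node $u$ in $\mathsf{INIT}$ that receives a message from $v$ sets $\mathrm{parent}_u=v$, $\mathrm{children}_u=\mathcal{N}_u\setminus\{v\}$, $\mathrm{count}_u=0$ and $\mathrm{state}_u=\mathsf{IDLE}$, and sends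 a message to $v$. (ii) MarkSibling: a node $u$ in $\mathsf{IDLE}$ or $\mathsf{DONE}$ that receives a message from some $v\neq\mathrm{parent}_u$ removes $v$ from $\mathrm{children}_u$ and sends a message to $v$. (iii) Explore: a node $u$ in $\mathsf{IDLE}$ that receives a message from $\mathrm{parent}_u$ (or the root, when it invokes Explore) proceeds as follows. - It sets $\mathrm{state}_u=\mathsf{EXPLORE}$ and increments $\mathrm{count}_u$. - Sequentially, for each $v\in\mathcal{N}_u\setminus\{\mathrm{parent}_u\}$, it sends a message to $v$ and waits until it receives a message from $v$. - If $\mathrm{count}_u=n-1$, it performs an extra "dummy" exploration: sequentially, for each $v\in\mathrm{children}_u$, it sends a message to $v$ and waits for a message from $v$. - It then sends a message to $\mathrm{parent}_u$; the root skips this step. - Finally it sets $\mathrm{state}_u=\mathsf{DONE}$ if $\mathrm{count}_u=n-1$, and $\mathrm{state}_u=\mathsf{IDLE}$ otherwise. *)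

theory Defs
  imports Main "HOL-Library.Multiset"
begin

definition nbrs :: "('v \<times> 'v) set \<Rightarrow> 'v \<Rightarrow> 'v set" where
  "nbrs E u = {v. (u, v) \<in> E}"

definition graph_dist :: "('v \<times> 'v) set \<Rightarrow> 'v \<Rightarrow> 'v \<Rightarrow> nat" where
  "graph_dist E u v = (LEAST k. (u, v) \<in> E ^^ k)"

definition connected_graph :: "'v set \<Rightarrow> ('v \<times> 'v) set \<Rightarrow> bool" where
  "connected_graph V E \<longleftrightarrow> finite V \<and> E \<subseteq> V \<times> V \<and> sym E \<and> irrefl E
     \<and> (\<forall>u\<in>V. \<forall>v\<in>V. (u, v) \<in> E\<^sup>*)"

datatype nstate = INIT | IDLE | EXPLORE | DONE

(* Local state of a node.  par = None encodes \<bottom>.  The fields todo / wait / dummy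
   are the program counter of the sequential Explore procedure:
   todo  = neighbours still to be visited in the current loop,
   wait  = Some v while waiting for a message from v,
   dummy = whether the extra dummy exploration loop has been started. *)
record 'v lstate =
  st    :: nstate
  par   :: "'v option"
  chl   :: "'v set"
  cnt   :: nat
  todo  :: "'v set"
  wait  :: "'v option"
  dummy :: bool

(* Global configuration: local states and the multiset of in-flight messages
   (sender, receiver); contents are irrelevant (content-oblivious). *)
record 'v config =
  loc  :: "'v \<Rightarrow> 'v lstate"
  msgs :: "('v \<times> 'v) multiset"

datatype 'v action =
    SetParent 'v 'v      (* delivery of message from v to u *)
  | MarkSibling 'v 'v
  | ExploreStart 'v 'v
  | RootStart 'v
  | SendNext 'v 'v
  | RecvReply 'v 'v
  | StartDummy 'v
  | Finish 'v            (* end of an invocation of Explore at a node *)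

definition init_config :: "('v \<times> 'v) set \<Rightarrow> 'v \<Rightarrow> 'v config" where
  "init_config E r =
     \<lparr> loc = (\<lambda>u. if u = r
                  then \<lparr>st = IDLE, par = None, chl = nbrs E r, cnt = 0, todo = {}, wait = None, dummy = False\<rparr>
                  else \<lparr>st = INIT, par = None, chl = {}, cnt = 0, todo = {}, wait = None, dummy = False\<rparr>),
       msgs = {#} \<rparr>"

(* One atomic step of the asynchronous system; any in-flight message may be
   delivered at any time (arbitrary delays / non-FIFO).  n = number of nodes. *)
inductive step :: "nat \<Rightarrow> ('v \<times> 'v) set \<Rightarrow> 'v \<Rightarrow> 'v config \<Rightarrow> 'v action \<Rightarrow> 'v config \<Rightarrow> bool"
  for n E r where
  set_parent:
    "\<lbrakk> (v, u) \<in># msgs c; st (loc c u) = INIT \<rbrakk> \<Longrightarrow>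
     step n E r c (SetParent v u)
       \<lparr> loc = (loc c)(u := \<lparr>st = IDLE, par = Some v, chl = nbrs E u - {v}, cnt = 0,
                              todo = {}, wait = None, dummy = False\<rparr>),
         msgs = msgs c - {#(v, u)#} + {#(u, v)#} \<rparr>"
| mark_sibling:
    "\<lbrakk> (v, u) \<in># msgs c; st (loc c u) = IDLE \<or> st (loc c u) = DONE; par (loc c u) \<noteq> Some v \<rbrakk> \<Longrightarrow>
     step n E r c (MarkSibling v u)
       \<lparr> loc = (loc c)(u := (loc c u)\<lparr>chl := chl (loc c u) - {v}\<rparr>),
         msgs = msgs c - {#(v, u)#} + {#(u, v)#} \<rparr>"
| explore_start:
    "\<lbrakk> (v, u) \<in># msgs c; st (loc c u) = IDLE; par (loc c u) = Some v \<rbrakk> \<Longrightarrow>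
     step n E r c (ExploreStart v u)
       \<lparr> loc = (loc c)(u := (loc c u)\<lparr>st := EXPLORE, cnt := Suc (cnt (loc c u)),
                                      todo := nbrs E u - {v}, wait := None, dummy := False\<rparr>),
         msgs = msgs c - {#(v, u)#} \<rparr>"
| root_start:
    "st (loc c r) = IDLE \<Longrightarrow>
     step n E r c (RootStart r)
       \<lparr> loc = (loc c)(r := (loc c r)\<lparr>st := EXPLORE, cnt := Suc (cnt (loc c r)),
                                      todo := nbrs E r, wait := None, dummy := False\<rparr>),
         msgs = msgs c \<rparr>"
| send_next:
    "\<lbrakk> st (loc c u) = EXPLORE; wait (loc c u) = None; v \<in> todo (loc c u) \<rbrakk> \<Longrightarrow>
     step n E r c (SendNext u v)
       \<lparr> loc = (loc c)(u := (loc c u)\<lparr>todo := todo (loc c u) - {v}, wait := Some v\<rparr>),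
         msgs = msgs c + {#(u, v)#} \<rparr>"
| recv_reply:
    "\<lbrakk> st (loc c u) = EXPLORE; wait (loc c u) = Some v; (v, u) \<in># msgs c \<rbrakk> \<Longrightarrow>
     step n E r c (RecvReply v u)
       \<lparr> loc = (loc c)(u := (loc c u)\<lparr>wait := None\<rparr>),
         msgs = msgs c - {#(v, u)#} \<rparr>"
| start_dummy:
    "\<lbrakk> st (loc c u) = EXPLORE; wait (loc c u) = None; todo (loc c u) = {};
       \<not> dummy (loc c u); cnt (loc c u) = n - 1 \<rbrakk> \<Longrightarrow>
     step n E r c (StartDummy u)
       \<lparr> loc = (loc c)(u := (loc c u)\<lparr>dummy := True, todo := chl (loc c u)\<rparr>),
         msgs = msgs c \<rparr>"
| finish:
    "\<lbrakk> st (loc c u) = EXPLORE; wait (loc c u) = None; todo (loc c u) = {};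
       dummy (loc c u) \<or> cnt (loc c u) \<noteq> n - 1 \<rbrakk> \<Longrightarrow>
     step n E r c (Finish u)
       \<lparr> loc = (loc c)(u := (loc c u)\<lparr>st := (if cnt (loc c u) = n - 1 then DONE else IDLE)\<rparr>),
         msgs = msgs c + (case par (loc c u) of None \<Rightarrow> {#} | Some p \<Rightarrow> {#(u, p)#}) \<rparr>"

(* run n E r c j : configuration c is reachable from the initial configuration by
   an execution in which the root has completed exactly j invocations of Explore. *)
inductive run :: "nat \<Rightarrow> ('v \<times> 'v) set \<Rightarrow> 'v \<Rightarrow> 'v config \<Rightarrow> nat \<Rightarrow> bool"
  for n E r where
  run_init: "run n E r (init_config E r) 0"
| run_step: "\<lbrakk> run n E r c j; step n E r c a c' \<rbrakk> \<Longrightarrow>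
             run n E r c' (if a = Finish r then Suc j else j)"

end

theory Submission
  imports Defs
begin

text \<open>
  A node at distance d from the root performs its i-th Explore during the root's (d + i)-th one,
  so between two root invocations every reached node u satisfies \<open>level u + cnt u = cnt r\<close>.
  The Explore waves travel down the BFS tree one at a time: exactly one message is in flight,
  and the exploring nodes form a chain from r with one node per level, each waiting for its
  successor.  The k-th wave reaches the nodes at distance k through the requests of the nodes at
  distance k - 1, and nothing beyond.  Once the root counter reaches n - 1, which bounds every
  distance, all nodes are reached and the dummy exploration can no longer change a parent or
  wake up a node.
\<close>

locale rooted_graph =
  fixes V :: "'v set" and E :: "('v \<times> 'v) set" and r :: 'v
  assumes connected: "connected_graph V E" and root_in_V: "r \<in> V"
begin

abbreviation level :: "'v \<Rightarrow> nat" where "level \<equiv> graph_dist E r"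

lemma finite_V: "finite V" and edges_in_V: "E \<subseteq> V \<times> V" and sym_E: "sym E"
  and irrefl_E: "irrefl E" and connected_V: "\<And>u v. u \<in> V \<Longrightarrow> v \<in> V \<Longrightarrow> (u, v) \<in> E\<^sup>*"
  using connected by (auto simp: connected_graph_def)

lemma edge_in_V: "(u, w) \<in> E \<Longrightarrow> u \<in> V \<and> w \<in> V"
  using edges_in_V by auto

lemma edge_sym: "(u, w) \<in> E \<Longrightarrow> (w, u) \<in> E"
  using sym_E by (auto dest: symD)

lemma edge_neq: "(u, w) \<in> E \<Longrightarrow> u \<noteq> w"
  using irrefl_E by (auto simp: irrefl_def)

lemma level_root [simp]: "level r = 0"
  by (simp add: graph_dist_def)

lemma path_level: "u \<in> V \<Longrightarrow> (r, u) \<in> E ^^ level u"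
  unfolding graph_dist_def
  by (rule LeastI_ex) (use connected_V root_in_V rtrancl_power in blast)

lemma level_0_root: "u \<in> V \<Longrightarrow> level u = 0 \<Longrightarrow> u = r"
  using path_level[of u] by simp

lemma level_edge: "(u, w) \<in> E \<Longrightarrow> level w \<le> Suc (level u)"
proof -
  assume e: "(u, w) \<in> E"
  then have "(r, w) \<in> E ^^ Suc (level u)"
    using path_level edge_in_V by (meson relpow_Suc_I)
  then show ?thesis unfolding graph_dist_def by (rule Least_le)
qed

lemma level_edge': "(u, w) \<in> E \<Longrightarrow> level u \<le> Suc (level w)"
  by (rule level_edge[OF edge_sym])

lemma level_Suc_pred:
  assumes u: "u \<in> V" "level u = Suc k"
  shows "\<exists>w. (w, u) \<in> E \<and> level w = k"
proof -
  obtain w where w: "(r, w) \<in> E ^^ k" "(w, u) \<in> E"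
    using path_level[OF u(1)] u(2) by (auto elim: relpow_Suc_E)
  have "level w \<le> k"
    using w(1) unfolding graph_dist_def by (rule Least_le)
  with level_edge[OF w(2)] u(2) w(2) show ?thesis by auto
qed

lemma level_intermediate: "x \<in> V \<Longrightarrow> m \<le> level x \<Longrightarrow> \<exists>w\<in>V. level w = m"
proof (induction "level x" arbitrary: x)
  case 0
  then show ?case by (metis le_zero_eq)
next
  case (Suc k)
  show ?case
  proof (cases "m = level x")
    case False
    obtain w where "(w, x) \<in> E" "level w = k"
      using level_Suc_pred[OF Suc.prems(1)] Suc.hyps(2) by metis
    with False Suc show ?thesis using edge_in_V by (metis le_SucE)
  qed (use Suc in auto)
qed

text \<open>All levels \<open>0, \<dots>, level u\<close> are occupied, so there are at most \<open>card V\<close> of them.\<close>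
lemma level_less_card: "u \<in> V \<Longrightarrow> level u < card V"
proof -
  assume u: "u \<in> V"
  have "{0..level u} \<subseteq> level ` V"
    using level_intermediate[OF u] by (auto simp: image_iff) (metis)
  then have "card {0..level u} \<le> card (level ` V)"
    using finite_V by (intro card_mono) auto
  also have "\<dots> \<le> card V"
    using finite_V by (rule card_image_le)
  finally show ?thesis by simp
qed

end

locale bfs_run = rooted_graph V E r
  for V :: "'v set" and E :: "('v \<times> 'v) set" and r :: 'v +
  assumes two_nodes: "2 \<le> card V"
begin

abbreviation n :: nat where "n \<equiv> card V"

definition tree_child :: "'v config \<Rightarrow> 'v \<Rightarrow> 'v \<Rightarrow> bool" where
  "tree_child c u w \<longleftrightarrow> st (loc c w) \<noteq> INIT \<and> par (loc c w) = Some u"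

text \<open>
  An idle node is \<open>synced\<close> if it has already performed its Explore for the root's current
  invocation, and \<open>behind\<close> if that Explore is still to come.
\<close>
definition behind :: "'v config \<Rightarrow> 'v \<Rightarrow> bool" where
  "behind c u \<longleftrightarrow> st (loc c u) = IDLE \<and> level u + cnt (loc c u) + 1 = cnt (loc c r)"

definition synced :: "'v config \<Rightarrow> 'v \<Rightarrow> bool" where
  "synced c u \<longleftrightarrow> st (loc c u) = IDLE \<and> level u + cnt (loc c u) = cnt (loc c r)"

definition request_msg :: "'v config \<Rightarrow> 'v \<Rightarrow> 'v \<Rightarrow> bool" where
  "request_msg c a b \<longleftrightarrow> st (loc c a) = EXPLORE \<and> wait (loc c a) = Some b
     \<and> st (loc c b) \<noteq> EXPLORE \<and> (tree_child c a b \<longrightarrow> behind c b)"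

definition reply_msg :: "'v config \<Rightarrow> 'v \<Rightarrow> 'v \<Rightarrow> bool" where
  "reply_msg c a b \<longleftrightarrow> st (loc c b) = EXPLORE \<and> wait (loc c b) = Some a
     \<and> st (loc c a) \<noteq> INIT \<and> st (loc c a) \<noteq> EXPLORE \<and> (tree_child c b a \<longrightarrow> synced c a)"

text \<open>
  Invariant while the root counter is below \<open>n - 1\<close> or the root is still in its last proper
  loop; \<open>j\<close> is the number of completed root invocations.  The active node is the exploring
  node that is not waiting; when there is none, the single message in flight is a request or
  a reply along an edge between the deepest exploring node and one of its neighbours.
\<close>
definition wave_inv :: "'v config \<Rightarrow> nat \<Rightarrow> bool" where
  "wave_inv c j \<longleftrightarrow>
  par (loc c r) = None \<and>
  ((st (loc c r) = IDLE \<and> j = cnt (loc c r) \<and> j < n - 1 \<and> msgs c = {#}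
      \<and> (\<forall>u. st (loc c u) \<noteq> INIT \<longrightarrow> synced c u)) \<or>
   (st (loc c r) = EXPLORE \<and> Suc j = cnt (loc c r) \<and> cnt (loc c r) \<le> n - 1)) \<and>
  (\<forall>u. st (loc c u) \<noteq> INIT \<longrightarrow> u \<in> V) \<and>
  (\<forall>u. u \<noteq> r \<longrightarrow> st (loc c u) \<noteq> INIT \<longrightarrow>
      (\<exists>p. par (loc c u) = Some p \<and> (u, p) \<in> E \<and> Suc (level p) = level u)) \<and>
  (\<forall>u\<in>V. level u \<le> j \<longrightarrow> st (loc c u) \<noteq> INIT) \<and>
  (\<forall>u\<in>V. cnt (loc c r) < level u \<longrightarrow> st (loc c u) = INIT) \<and>
  (\<forall>u. st (loc c u) \<noteq> DONE) \<and>
  (\<forall>u. chl (loc c u) \<subseteq> nbrs E u) \<and>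
  (\<forall>u. u \<noteq> r \<longrightarrow> st (loc c u) \<noteq> INIT \<longrightarrow> behind c u \<or> synced c u \<or> st (loc c u) = EXPLORE) \<and>
  (\<forall>u. st (loc c u) = EXPLORE \<longrightarrow>
      level u + cnt (loc c u) = cnt (loc c r) \<and> 1 \<le> cnt (loc c u) \<and> \<not> dummy (loc c u)
      \<and> todo (loc c u) \<subseteq> nbrs E u \<and> (\<forall>p. par (loc c u) = Some p \<longrightarrow> p \<notin> todo (loc c u))
      \<and> (\<forall>w. wait (loc c u) = Some w \<longrightarrow> (u, w) \<in> E \<and> w \<notin> todo (loc c u))) \<and>
  (\<forall>u w. st (loc c u) = EXPLORE \<longrightarrow> tree_child c u w \<longrightarrow>
      (w \<in> todo (loc c u) \<longrightarrow> behind c w)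
      \<and> (w \<notin> todo (loc c u) \<longrightarrow> wait (loc c u) \<noteq> Some w \<longrightarrow> synced c w)) \<and>
  (\<forall>u w. st (loc c u) = EXPLORE \<longrightarrow> (u, w) \<in> E \<longrightarrow> w \<notin> todo (loc c u) \<longrightarrow>
      wait (loc c u) \<noteq> Some w \<longrightarrow> level w = Suc (level u) \<longrightarrow> st (loc c w) \<noteq> INIT) \<and>
  (\<forall>u w. behind c u \<longrightarrow> tree_child c u w \<longrightarrow> behind c w) \<and>
  (\<forall>u w. synced c u \<longrightarrow> tree_child c u w \<longrightarrow> synced c w) \<and>
  (\<forall>u w. synced c u \<longrightarrow> (u, w) \<in> E \<longrightarrow> level w = Suc (level u) \<longrightarrow>
      level w \<le> cnt (loc c r) \<longrightarrow> st (loc c w) \<noteq> INIT) \<and>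
  (\<forall>u. u \<noteq> r \<longrightarrow> st (loc c u) = EXPLORE \<longrightarrow>
      (\<exists>p. par (loc c u) = Some p \<and> st (loc c p) = EXPLORE \<and> wait (loc c p) = Some u)) \<and>
  (\<forall>u w. st (loc c u) = EXPLORE \<longrightarrow> st (loc c w) = EXPLORE \<longrightarrow> level u = level w \<longrightarrow> u = w) \<and>
  (\<forall>u. st (loc c u) = EXPLORE \<longrightarrow> wait (loc c u) = None \<longrightarrow> msgs c = {#}) \<and>
  (\<forall>u w. st (loc c u) = EXPLORE \<longrightarrow> wait (loc c u) = None \<longrightarrow>
      st (loc c w) = EXPLORE \<longrightarrow> wait (loc c w) = None \<longrightarrow> u = w) \<and>
  (msgs c = {#} \<or> (\<exists>a b. msgs c = {#(a, b)#} \<and> (request_msg c a b \<or> reply_msg c a b)))"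

text \<open>Invariant from the start of the root's dummy exploration on.\<close>
definition complete_inv :: "'v config \<Rightarrow> nat \<Rightarrow> bool" where
  "complete_inv c j \<longleftrightarrow>
  par (loc c r) = None \<and> cnt (loc c r) = n - 1 \<and>
  ((st (loc c r) = EXPLORE \<and> Suc j = n - 1) \<or> (st (loc c r) = DONE \<and> j = n - 1)) \<and>
  (\<forall>u. st (loc c u) \<noteq> INIT \<longrightarrow> u \<in> V) \<and>
  (\<forall>u\<in>V. st (loc c u) \<noteq> INIT) \<and>
  (\<forall>u. u \<noteq> r \<longrightarrow> st (loc c u) \<noteq> INIT \<longrightarrow>
      (\<exists>p. par (loc c u) = Some p \<and> (u, p) \<in> E \<and> Suc (level p) = level u)) \<and>
  (\<forall>u. st (loc c u) = EXPLORE \<longrightarrow> todo (loc c u) \<subseteq> nbrs E u) \<and>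
  (\<forall>u. chl (loc c u) \<subseteq> nbrs E u) \<and>
  (\<forall>x. x \<in># msgs c \<longrightarrow> x \<in> E)"

lemma wave_invD:
  assumes "wave_inv c j"
  shows "par (loc c r) = None"
    and "(st (loc c r) = IDLE \<and> j = cnt (loc c r) \<and> j < n - 1 \<and> msgs c = {#}
        \<and> (\<forall>u. st (loc c u) \<noteq> INIT \<longrightarrow> synced c u)) \<or>
        (st (loc c r) = EXPLORE \<and> Suc j = cnt (loc c r) \<and> cnt (loc c r) \<le> n - 1)"
    and "\<forall>u. st (loc c u) \<noteq> INIT \<longrightarrow> u \<in> V"
    and "\<forall>u. u \<noteq> r \<longrightarrow> st (loc c u) \<noteq> INIT \<longrightarrow>
        (\<exists>p. par (loc c u) = Some p \<and> (u, p) \<in> E \<and> Suc (level p) = level u)"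
    and "\<forall>u\<in>V. level u \<le> j \<longrightarrow> st (loc c u) \<noteq> INIT"
    and "\<forall>u\<in>V. cnt (loc c r) < level u \<longrightarrow> st (loc c u) = INIT"
    and "\<forall>u. st (loc c u) \<noteq> DONE"
    and "\<forall>u. chl (loc c u) \<subseteq> nbrs E u"
    and "\<forall>u. u \<noteq> r \<longrightarrow> st (loc c u) \<noteq> INIT \<longrightarrow> behind c u \<or> synced c u \<or> st (loc c u) = EXPLORE"
    and "\<forall>u. st (loc c u) = EXPLORE \<longrightarrow>
        level u + cnt (loc c u) = cnt (loc c r) \<and> 1 \<le> cnt (loc c u) \<and> \<not> dummy (loc c u)
        \<and> todo (loc c u) \<subseteq> nbrs E u \<and> (\<forall>p. par (loc c u) = Some p \<longrightarrow> p \<notin> todo (loc c u))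
        \<and> (\<forall>w. wait (loc c u) = Some w \<longrightarrow> (u, w) \<in> E \<and> w \<notin> todo (loc c u))"
    and "\<forall>u w. st (loc c u) = EXPLORE \<longrightarrow> tree_child c u w \<longrightarrow>
        (w \<in> todo (loc c u) \<longrightarrow> behind c w)
        \<and> (w \<notin> todo (loc c u) \<longrightarrow> wait (loc c u) \<noteq> Some w \<longrightarrow> synced c w)"
    and "\<forall>u w. st (loc c u) = EXPLORE \<longrightarrow> (u, w) \<in> E \<longrightarrow> w \<notin> todo (loc c u) \<longrightarrow>
        wait (loc c u) \<noteq> Some w \<longrightarrow> level w = Suc (level u) \<longrightarrow> st (loc c w) \<noteq> INIT"
    and "\<forall>u w. behind c u \<longrightarrow> tree_child c u w \<longrightarrow> behind c w"
    and "\<forall>u w. synced c u \<longrightarrow> tree_child c u w \<longrightarrow> synced c w"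
    and "\<forall>u w. synced c u \<longrightarrow> (u, w) \<in> E \<longrightarrow> level w = Suc (level u) \<longrightarrow>
        level w \<le> cnt (loc c r) \<longrightarrow> st (loc c w) \<noteq> INIT"
    and "\<forall>u. u \<noteq> r \<longrightarrow> st (loc c u) = EXPLORE \<longrightarrow>
        (\<exists>p. par (loc c u) = Some p \<and> st (loc c p) = EXPLORE \<and> wait (loc c p) = Some u)"
    and "\<forall>u w. st (loc c u) = EXPLORE \<longrightarrow> st (loc c w) = EXPLORE \<longrightarrow> level u = level w \<longrightarrow> u = w"
    and "\<forall>u. st (loc c u) = EXPLORE \<longrightarrow> wait (loc c u) = None \<longrightarrow> msgs c = {#}"
    and "\<forall>u w. st (loc c u) = EXPLORE \<longrightarrow> wait (loc c u) = None \<longrightarrow>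
        st (loc c w) = EXPLORE \<longrightarrow> wait (loc c w) = None \<longrightarrow> u = w"
    and "msgs c = {#} \<or> (\<exists>a b. msgs c = {#(a, b)#} \<and> (request_msg c a b \<or> reply_msg c a b))"
  by (insert assms, unfold wave_inv_def) (elim conjE; assumption)+

lemmas inv_root_no_parent = wave_invD(1)[rule_format]
  and inv_root_phase = wave_invD(2)[rule_format]
  and inv_reached_in_V = wave_invD(3)[rule_format]
  and inv_parent_level = wave_invD(4)[rule_format]
  and inv_low_levels_reached = wave_invD(5)[rule_format]
  and inv_high_levels_INIT = wave_invD(6)[rule_format]
  and inv_no_DONE = wave_invD(7)[rule_format]
  and inv_chl_nbrs = wave_invD(8)[rule_format]
  and inv_reached_status = wave_invD(9)[rule_format]
  and inv_exploring = wave_invD(10)[rule_format]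
  and inv_exploring_children = wave_invD(11)[rule_format]
  and inv_exploring_visited_reached = wave_invD(12)[rule_format]
  and inv_behind_child = wave_invD(13)[rule_format]
  and inv_synced_child = wave_invD(14)[rule_format]
  and inv_synced_nbr_reached = wave_invD(15)[rule_format]
  and inv_exploring_parent_waits = wave_invD(16)[rule_format]
  and inv_exploring_level_inj = wave_invD(17)[rule_format]
  and inv_active_no_msgs = wave_invD(18)[rule_format]
  and inv_active_unique = wave_invD(19)[rule_format]
  and inv_msgs = wave_invD(20)[rule_format]

lemma complete_invD:
  assumes "complete_inv c j"
  shows "par (loc c r) = None"
    and "cnt (loc c r) = n - 1"
    and "(st (loc c r) = EXPLORE \<and> Suc j = n - 1) \<or> (st (loc c r) = DONE \<and> j = n - 1)"
    and "\<forall>u. st (loc c u) \<noteq> INIT \<longrightarrow> u \<in> V"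
    and "\<forall>u\<in>V. st (loc c u) \<noteq> INIT"
    and "\<forall>u. u \<noteq> r \<longrightarrow> st (loc c u) \<noteq> INIT \<longrightarrow>
        (\<exists>p. par (loc c u) = Some p \<and> (u, p) \<in> E \<and> Suc (level p) = level u)"
    and "\<forall>u. st (loc c u) = EXPLORE \<longrightarrow> todo (loc c u) \<subseteq> nbrs E u"
    and "\<forall>u. chl (loc c u) \<subseteq> nbrs E u"
    and "\<forall>x. x \<in># msgs c \<longrightarrow> x \<in> E"
  by (insert assms, unfold complete_inv_def) (elim conjE; assumption)+

lemmas cinv_root_no_parent = complete_invD(1)[rule_format]
  and cinv_root_phase = complete_invD(3)[rule_format]
  and cinv_all_reached = complete_invD(5)[rule_format]
  and cinv_parent_level = complete_invD(6)[rule_format]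
  and cinv_todo_nbrs = complete_invD(7)[rule_format]
  and cinv_chl_nbrs = complete_invD(8)[rule_format]
  and cinv_msgs_edges = complete_invD(9)[rule_format]

lemma root_exploring:
  assumes I: "wave_inv c j" and ex: "st (loc c x) = EXPLORE"
  shows "st (loc c r) = EXPLORE \<and> Suc j = cnt (loc c r) \<and> cnt (loc c r) \<le> n - 1"
proof -
  have "st (loc c r) \<noteq> IDLE"
  proof
    assume "st (loc c r) = IDLE"
    then have "synced c x" using inv_root_phase[OF I] ex by auto
    then show False using ex unfolding synced_def by simp
  qed
  then show ?thesis using inv_root_phase[OF I] by auto
qed

lemma root_loop_synced:
  assumes I: "wave_inv c j" and er: "st (loc c r) = EXPLORE" and wr: "wait (loc c r) = None"
    and tr: "todo (loc c r) = {}"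
  shows "x \<noteq> r \<Longrightarrow> st (loc c x) \<noteq> INIT \<Longrightarrow> synced c x"
proof (induction "level x" arbitrary: x rule: less_induct)
  case (less x)
  obtain p where p: "par (loc c x) = Some p" "(x, p) \<in> E" "Suc (level p) = level x"
    using inv_parent_level[OF I] less.prems by blast
  have child: "tree_child c p x"
    using p less.prems unfolding tree_child_def by simp
  show ?case
  proof (cases "p = r")
    case True
    then show ?thesis using inv_exploring_children[OF I er, of x] child tr wr by simp
  next
    case False
    have "x \<in> V" "p \<in> V"
      using inv_reached_in_V[OF I] less.prems edge_in_V p(2) by blast+
    then have "level p \<le> j"
      using inv_high_levels_INIT[OF I] inv_root_phase[OF I] er less.prems p(3) by fastforce
    then have "st (loc c p) \<noteq> INIT"
      using inv_low_levels_reached[OF I \<open>p \<in> V\<close>] by blast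
    then have "synced c p" using less.hyps[of p] p(3) False by simp
    then show ?thesis using inv_synced_child[OF I _ child] by blast
  qed
qed

lemma root_loop_reached:
  assumes I: "wave_inv c j" and er: "st (loc c r) = EXPLORE" and wr: "wait (loc c r) = None"
    and tr: "todo (loc c r) = {}" and x: "x \<in> V" "level x \<le> cnt (loc c r)"
  shows "st (loc c x) \<noteq> INIT"
proof (cases "level x \<le> j")
  case True
  then show ?thesis using inv_low_levels_reached[OF I x(1)] by blast
next
  case False
  then have x_level: "level x = Suc j"
    using x(2) inv_root_phase[OF I] er by auto
  then obtain w where w: "(w, x) \<in> E" "level w = j"
    using level_Suc_pred[OF x(1)] by blast
  show ?thesis
  proof (cases "w = r")
    case True
    then show ?thesis using inv_exploring_visited_reached[OF I er, of x] w x_level tr wr by simp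
  next
    case False
    have "st (loc c w) \<noteq> INIT"
      using inv_low_levels_reached[OF I] edge_in_V w by blast
    then have "synced c w" using root_loop_synced[OF I er wr tr] False by blast
    then show ?thesis using inv_synced_nbr_reached[OF I, of w x] w x_level x(2) by simp
  qed
qed

lemma delivered_request:
  assumes I: "wave_inv c j" and m: "(v, u) \<in># msgs c" and u: "st (loc c u) \<noteq> EXPLORE"
  shows "msgs c = {#(v, u)#}" and "request_msg c v u"
    and "st (loc c v) = EXPLORE" and "wait (loc c v) = Some u" and "(v, u) \<in> E"
proof -
  show msgs_c: "msgs c = {#(v, u)#}" using inv_msgs[OF I] m by auto
  show rq: "request_msg c v u" using inv_msgs[OF I] msgs_c u unfolding reply_msg_def by auto
  then show ev: "st (loc c v) = EXPLORE" and wv: "wait (loc c v) = Some u"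
    unfolding request_msg_def by auto
  show "(v, u) \<in> E" using inv_exploring[OF I ev] wv by auto
qed

lemma delivered_reply:
  assumes I: "wave_inv c j" and m: "(v, u) \<in># msgs c" and u: "st (loc c u) = EXPLORE"
  shows "msgs c = {#(v, u)#}" and "reply_msg c v u"
proof -
  show msgs_c: "msgs c = {#(v, u)#}" using inv_msgs[OF I] m by auto
  show "reply_msg c v u" using inv_msgs[OF I] msgs_c u unfolding request_msg_def by auto
qed

lemma request_to_INIT_level:
  assumes I: "wave_inv c j" and m: "(v, u) \<in># msgs c" and u: "st (loc c u) = INIT"
  shows "level u = Suc (level v)" and "level u = cnt (loc c r)"
proof -
  have ev: "st (loc c v) = EXPLORE" and e: "(v, u) \<in> E"
    using delivered_request[OF I m] u by auto
  have "level v + cnt (loc c v) = cnt (loc c r)" "1 \<le> cnt (loc c v)"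
    using inv_exploring[OF I ev] by auto
  moreover have "level u \<le> Suc (level v)" using level_edge[OF e] .
  moreover have "\<not> level u \<le> j"
    using inv_low_levels_reached[OF I] edge_in_V[OF e] u by auto
  ultimately show "level u = Suc (level v)" "level u = cnt (loc c r)"
    using root_exploring[OF I ev] by auto
qed

lemma frontier_childless:
  assumes I: "wave_inv c j" and u: "level u = cnt (loc c r)"
  shows "\<not> tree_child c u w"
proof
  assume w: "tree_child c u w"
  then have "w \<noteq> r" "st (loc c w) \<noteq> INIT" using inv_root_no_parent[OF I]
    by (auto simp: tree_child_def)
  then have "level w = Suc (level u)" "w \<in> V"
    using inv_parent_level[OF I] inv_reached_in_V[OF I] w by (fastforce simp: tree_child_def)+
  then show False
    using inv_high_levels_INIT[OF I] u \<open>st (loc c w) \<noteq> INIT\<close> by simp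
qed

text \<open>Exploring nodes lie on distinct levels and each waits for its successor, so the active
  node cannot send to another exploring node.\<close>
lemma active_target_not_exploring:
  assumes I: "wave_inv c j" and eu: "st (loc c u) = EXPLORE" and wu: "wait (loc c u) = None"
    and vt: "v \<in> todo (loc c u)"
  shows "st (loc c v) \<noteq> EXPLORE"
proof
  assume ev: "st (loc c v) = EXPLORE"
  have uv: "(u, v) \<in> E" using inv_exploring[OF I eu] vt by (auto simp: nbrs_def)
  consider "level v = level u" | "level v = Suc (level u)" | "level u = Suc (level v)"
    using level_edge[OF uv] level_edge'[OF uv] by linarith
  then show False
  proof cases
    case 1
    then show False using inv_exploring_level_inj[OF I eu ev] edge_neq[OF uv] by simp
  next
    case 2
    then have "v \<noteq> r" by auto
    then obtain q where q: "par (loc c v) = Some q" "st (loc c q) = EXPLORE" "wait (loc c q) = Some v"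
      and "Suc (level q) = level v"
      using inv_exploring_parent_waits[OF I] inv_parent_level[OF I] ev by fastforce
    then have "q = u" using inv_exploring_level_inj[OF I q(2) eu] 2 by simp
    then show False using q wu by simp
  next
    case 3
    then have "u \<noteq> r" by auto
    then obtain p where p: "par (loc c u) = Some p" "st (loc c p) = EXPLORE"
      and "Suc (level p) = level u"
      using inv_exploring_parent_waits[OF I] inv_parent_level[OF I] eu by fastforce
    then have "p = v" using inv_exploring_level_inj[OF I p(2) ev] 3 by simp
    then show False using p inv_exploring[OF I eu] vt by auto
  qed
qed

lemma awaited_child_level_unique:
  assumes I: "wave_inv c j" and ev: "st (loc c v) = EXPLORE" and wv: "wait (loc c v) = Some u"
    and du: "level u = Suc (level v)" and y: "y \<noteq> u" "st (loc c y) = EXPLORE"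
  shows "level y \<noteq> level u"
proof
  assume same: "level y = level u"
  then have "y \<noteq> r" using du by auto
  then obtain q where q: "par (loc c y) = Some q" "st (loc c q) = EXPLORE" "wait (loc c q) = Some y"
    and "Suc (level q) = level y"
    using inv_exploring_parent_waits[OF I] inv_parent_level[OF I] y(2) by fastforce
  then have "q = v" using inv_exploring_level_inj[OF I q(2) ev] same du by simp
  then show False using q wv y by simp
qed

lemma wave_inv_set_parent:
  assumes I: "wave_inv c j" and s: "step n E r c (SetParent v u) c'"
  shows "wave_inv c' j"
proof -
  from s have m: "(v,u) \<in># msgs c" and iu: "st (loc c u) = INIT"
    and c': "c' = \<lparr> loc = (loc c)(u := \<lparr>st = IDLE, par = Some v, chl = nbrs E u - {v}, cnt = 0,
                              todo = {}, wait = None, dummy = False\<rparr>),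
         msgs = msgs c - {#(v, u)#} + {#(u, v)#} \<rparr>"
    by (cases rule: step.cases; simp)+
  have msgs_c: "msgs c = {#(v, u)#}" and ev: "st (loc c v) = EXPLORE"
    and wv: "wait (loc c v) = Some u" and evu: "(v, u) \<in> E"
    using delivered_request[OF I m] iu by auto
  have ur: "u \<noteq> r" using inv_root_phase[OF I] iu by auto
  have root_phase: "st (loc c r) = EXPLORE \<and> Suc j = cnt (loc c r) \<and> cnt (loc c r) \<le> n - 1"
    using root_exploring[OF I ev] .
  have uV: "u \<in> V" "v \<in> V" using edge_in_V evu by auto
  have du: "level u = Suc (level v)" "level u = cnt (loc c r)"
    using request_to_INIT_level[OF I m iu] .
  have msgs': "msgs c' = {#(u,v)#}" using c' msgs_c by simp
  have loc_root: "loc c' r = loc c r" using c' ur by simp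
  have loc_other: "\<And>x. x \<noteq> u \<Longrightarrow> loc c' x = loc c x" using c' by simp
  have loc_u: "loc c' u = \<lparr>st = IDLE, par = Some v, chl = nbrs E u - {v}, cnt = 0,
                              todo = {}, wait = None, dummy = False\<rparr>" using c' by simp
  have vu: "v \<noteq> u" using edge_neq evu .
  have behind_iff: "\<And>x. behind c' x \<longleftrightarrow> behind c x \<and> x \<noteq> u"
  proof -
    fix x show "behind c' x \<longleftrightarrow> behind c x \<and> x \<noteq> u"
      
        by (cases "x = u")
        (use loc_u loc_root du iu loc_other in \<open>simp_all add: behind_def\<close>)
  qed
  have synced_iff: "\<And>x. synced c' x \<longleftrightarrow> (synced c x \<or> x = u)"
  proof -
    fix x show "synced c' x \<longleftrightarrow> (synced c x \<or> x = u)"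
      
        by (cases "x = u")
        (use loc_u loc_root du iu loc_other in \<open>simp_all add: synced_def\<close>)
  qed
  have child_iff: "\<And>x w. tree_child c' x w \<longleftrightarrow> (tree_child c x w \<or> (w = u \<and> x = v))"
  proof -
    fix x w show "tree_child c' x w \<longleftrightarrow> (tree_child c x w \<or> (w = u \<and> x = v))"
      by (cases "w = u") (use loc_u iu loc_other in \<open>auto simp add: tree_child_def\<close>)
  qed
  have no_active: "\<And>x. st (loc c x) = EXPLORE \<Longrightarrow> wait (loc c x) = None \<Longrightarrow> False"
    using inv_active_no_msgs[OF I] msgs_c by auto
  have st_upd: "\<And>x. st (loc c' x) = (if x = u then IDLE else st (loc c x))"
    using loc_other loc_u by simp
  show ?thesis
    unfolding wave_inv_def
    apply (intro conjI)
    subgoal using loc_root inv_root_no_parent[OF I] by simp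
    subgoal using loc_root root_phase by simp
    subgoal using inv_reached_in_V[OF I] uV st_upd by (metis)
    subgoal apply (intro allI impI) subgoal for x
      by (cases "x = u")
      (use inv_parent_level[OF I] edge_sym[OF evu] du loc_other loc_u in auto) done
    subgoal using inv_low_levels_reached[OF I] st_upd by (metis nstate.distinct(1))
    subgoal using inv_high_levels_INIT[OF I] du loc_root st_upd by (metis less_irrefl)
    subgoal using inv_no_DONE[OF I] st_upd by (metis nstate.distinct(10))
    subgoal apply (intro allI) subgoal for x
      by (cases "x = u") (use inv_chl_nbrs[OF I] loc_other loc_u in auto) done
    subgoal apply (intro allI) subgoal for x
      by (cases "x = u")
      (use inv_reached_status[OF I, of x] behind_iff[of x] synced_iff[of x] loc_other[of x] in auto)
      done
    subgoal apply (intro allI) subgoal for x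
      using inv_exploring[OF I, of x] loc_other[of x] loc_u loc_root by (cases "x = u") auto done
    subgoal apply (intro allI impI) subgoal for x w
      using inv_exploring_children[OF I, of x w] inv_exploring[OF I ev] child_iff[of x w]
        behind_iff[of w] synced_iff[of w] loc_other[of x] loc_u iu wv
      by (cases "x = u") (auto simp: tree_child_def) done
    subgoal apply (intro allI impI) subgoal for x w
      using inv_exploring_visited_reached[OF I, of x w] loc_other[of x] loc_other[of w] loc_u
      by (cases "x = u"; cases "w = u") auto done
    subgoal apply (intro allI impI) subgoal for x w
      using inv_behind_child[OF I, of x w] behind_iff[of x] behind_iff[of w] child_iff[of x w]
        ev iu
      by (auto simp: tree_child_def behind_def) done
    subgoal apply (intro allI impI) subgoal for x w
      using inv_synced_child[OF I, of x w] synced_iff[of x] synced_iff[of w] child_iff[of x w]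
        frontier_childless[OF I du(2), of w] vu ev
      by (auto simp: tree_child_def synced_def) done
    subgoal apply (intro allI impI) subgoal for x w
      using inv_synced_nbr_reached[OF I, of x w] synced_iff[of x] st_upd[of w] du loc_root
      by auto done
    subgoal apply (intro allI impI) subgoal premises prems for x
    proof -
      have xu: "x \<noteq> u" using prems(2) loc_u by auto
      obtain p where p: "par (loc c x) = Some p \<and> st (loc c p) = EXPLORE \<and> wait (loc c p) = Some x"
        using inv_exploring_parent_waits[OF I, of x] prems loc_other[OF xu] by auto
      moreover have "p \<noteq> u" using p iu by auto
      ultimately show ?thesis using loc_other xu by auto
    qed done
    subgoal apply (intro allI impI) subgoal for x w
      using inv_exploring_level_inj[OF I, of x w] st_upd[of x] st_upd[of w]
      by (auto split: if_splits) done
    subgoal apply (intro allI impI) subgoal for x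
      using no_active[of x] loc_other[of x] loc_u by (cases "x = u") auto done
    subgoal apply (intro allI impI) subgoal for x w
      using no_active[of x] loc_other[of x] loc_u by (cases "x = u") auto done
    subgoal
    proof -
      have "reply_msg c' u v"
        using loc_other[OF vu] loc_u ev wv synced_iff[of u] by (auto simp: reply_msg_def)
      then show ?thesis using msgs' by blast
    qed
    done
qed

lemma wave_inv_mark_sibling:
  assumes I: "wave_inv c j" and s: "step n E r c (MarkSibling v u) c'"
  shows "wave_inv c' j"
proof -
  from s have m: "(v,u) \<in># msgs c" and stu: "st (loc c u) = IDLE \<or> st (loc c u) = DONE"
    and pu: "par (loc c u) \<noteq> Some v"
    and c': "c' = \<lparr> loc = (loc c)(u := (loc c u)\<lparr>chl := chl (loc c u) - {v}\<rparr>),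
         msgs = msgs c - {#(v, u)#} + {#(u, v)#} \<rparr>"
    by (cases rule: step.cases; simp)+
  have iu: "st (loc c u) = IDLE" using stu inv_no_DONE[OF I] by auto
  have msgs_c: "msgs c = {#(v, u)#}" and ev: "st (loc c v) = EXPLORE"
    and wv: "wait (loc c v) = Some u"
    using delivered_request[OF I m] iu by auto
  have msgs': "msgs c' = {#(u,v)#}" using c' msgs_c by simp
  have loc_other: "\<And>x. x \<noteq> u \<Longrightarrow> loc c' x = loc c x" using c' by simp
  have loc_u: "loc c' u = (loc c u)\<lparr>chl := chl (loc c u) - {v}\<rparr>" using c' by simp
  have unchanged: "st (loc c' x) = st (loc c x)"
    "par (loc c' x) = par (loc c x)"
    "cnt (loc c' x) = cnt (loc c x)"
    "todo (loc c' x) = todo (loc c x)"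
    "wait (loc c' x) = wait (loc c x)"
    "dummy (loc c' x) = dummy (loc c x)" for x
    by (cases "x = u"; simp add: loc_other loc_u)+
  have behind_iff: "behind c' = behind c" by (rule ext) (simp add: behind_def unchanged)
  have synced_iff: "synced c' = synced c" by (rule ext) (simp add: synced_def unchanged)
  have child_iff: "tree_child c' = tree_child c" by (rule ext)+ (simp add: tree_child_def unchanged)
  have no_active: "\<And>x. st (loc c x) = EXPLORE \<Longrightarrow> wait (loc c x) = None \<Longrightarrow> False"
    using inv_active_no_msgs[OF I] msgs_c by auto
  show ?thesis
    unfolding wave_inv_def behind_iff synced_iff child_iff unchanged
    apply (intro conjI)
    subgoal using inv_root_no_parent[OF I] .
    subgoal using inv_root_phase[OF I] msgs_c by simp
    subgoal using inv_reached_in_V[OF I] by blast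
    subgoal using inv_parent_level[OF I] by blast
    subgoal using inv_low_levels_reached[OF I] by blast
    subgoal using inv_high_levels_INIT[OF I] by blast
    subgoal using inv_no_DONE[OF I] by blast
    subgoal apply (intro allI) subgoal for x
      by (cases "x = u") (use inv_chl_nbrs[OF I] loc_other loc_u in auto) done
    subgoal using inv_reached_status[OF I] by blast
    subgoal using inv_exploring[OF I] by blast
    subgoal using inv_exploring_children[OF I] by blast
    subgoal using inv_exploring_visited_reached[OF I] by blast
    subgoal using inv_behind_child[OF I] by blast
    subgoal using inv_synced_child[OF I] by blast
    subgoal using inv_synced_nbr_reached[OF I] by blast
    subgoal using inv_exploring_parent_waits[OF I] by blast
    subgoal using inv_exploring_level_inj[OF I] by blast
    subgoal using no_active by blast
    subgoal using no_active by blast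
    subgoal
    proof -
      have "reply_msg c' u v"
        using ev wv iu pu by (auto simp: reply_msg_def unchanged tree_child_def)
      then show ?thesis using msgs' by blast
    qed
    done
qed

lemma wave_inv_recv_reply:
  assumes I: "wave_inv c j" and s: "step n E r c (RecvReply v u) c'"
  shows "wave_inv c' j"
proof -
  from s have eu: "st (loc c u) = EXPLORE" and wu: "wait (loc c u) = Some v" and m: "(v,u) \<in># msgs c"
    and c': "c' = \<lparr> loc = (loc c)(u := (loc c u)\<lparr>wait := None\<rparr>), msgs = msgs c - {#(v, u)#} \<rparr>"
    by (cases rule: step.cases; simp)+
  have msgs_c: "msgs c = {#(v, u)#}" and rp: "reply_msg c v u"
    using delivered_reply[OF I m eu] by auto
  then have sv: "st (loc c v) \<noteq> INIT" "st (loc c v) \<noteq> EXPLORE" and fv: "tree_child c u v \<Longrightarrow> synced c v"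
    unfolding reply_msg_def by auto
  have msgs': "msgs c' = {#}" using c' msgs_c by simp
  have loc_other: "\<And>x. x \<noteq> u \<Longrightarrow> loc c' x = loc c x" using c' by simp
  have loc_u: "loc c' u = (loc c u)\<lparr>wait := None\<rparr>" using c' by simp
  have unchanged: "st (loc c' x) = st (loc c x)"
    "par (loc c' x) = par (loc c x)"
    "cnt (loc c' x) = cnt (loc c x)"
    "todo (loc c' x) = todo (loc c x)"
    "chl (loc c' x) = chl (loc c x)"
    "dummy (loc c' x) = dummy (loc c x)" for x
    by (cases "x = u"; simp add: loc_other loc_u)+
  have wait_upd: "\<And>x. wait (loc c' x) = (if x = u then None else wait (loc c x))"
    using loc_other loc_u by simp
  have behind_iff: "behind c' = behind c" by (rule ext) (simp add: behind_def unchanged)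
  have synced_iff: "synced c' = synced c" by (rule ext) (simp add: synced_def unchanged)
  have child_iff: "tree_child c' = tree_child c" by (rule ext)+ (simp add: tree_child_def unchanged)
  have no_active: "\<And>x. st (loc c x) = EXPLORE \<Longrightarrow> wait (loc c x) = None \<Longrightarrow> False"
    using inv_active_no_msgs[OF I] msgs_c by auto
  show ?thesis
    unfolding wave_inv_def behind_iff synced_iff child_iff unchanged
    apply (intro conjI)
    subgoal using inv_root_no_parent[OF I] .
    subgoal using inv_root_phase[OF I] msgs_c by simp
    subgoal using inv_reached_in_V[OF I] by blast
    subgoal using inv_parent_level[OF I] by blast
    subgoal using inv_low_levels_reached[OF I] by blast
    subgoal using inv_high_levels_INIT[OF I] by blast
    subgoal using inv_no_DONE[OF I] by blast
    subgoal using inv_chl_nbrs[OF I] by blast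
    subgoal using inv_reached_status[OF I] by blast
    subgoal apply (intro allI impI) subgoal for x
      using inv_exploring[OF I, of x] wait_upd[of x] by auto done
    subgoal apply (intro allI impI) subgoal for x w
      using inv_exploring_children[OF I, of x w] wait_upd[of x] fv wu by (cases "x = u") auto done
    subgoal apply (intro allI impI) subgoal for x w
      using inv_exploring_visited_reached[OF I, of x w] wait_upd[of x] sv wu
      by (cases "x = u") auto done
    subgoal using inv_behind_child[OF I] by blast
    subgoal using inv_synced_child[OF I] by blast
    subgoal using inv_synced_nbr_reached[OF I] by blast
    subgoal apply (intro allI impI) subgoal premises prems for x
    proof -
      obtain p where p: "par (loc c x) = Some p" "st (loc c p) = EXPLORE" "wait (loc c p) = Some x"
        using inv_exploring_parent_waits[OF I, of x] prems by auto
      have "p \<noteq> u" using p sv wu prems by auto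
      then show ?thesis using p wait_upd[of p] by auto
    qed done
    subgoal using inv_exploring_level_inj[OF I] by blast
    subgoal using msgs' by blast
    subgoal apply (intro allI impI) subgoal for x w
      using no_active[of x] no_active[of w] wait_upd[of x] wait_upd[of w]
      by (auto split: if_splits) done
    subgoal using msgs' by blast
    done
qed

lemma wave_inv_send_next:
  assumes I: "wave_inv c j" and s: "step n E r c (SendNext u v) c'"
  shows "wave_inv c' j"
proof -
  from s have eu: "st (loc c u) = EXPLORE" and wu: "wait (loc c u) = None" and vt: "v \<in> todo (loc c u)"
    and c': "c' = \<lparr> loc = (loc c)(u := (loc c u)\<lparr>todo := todo (loc c u) - {v}, wait := Some v\<rparr>),
         msgs = msgs c + {#(u, v)#} \<rparr>"
    by (cases rule: step.cases; simp)+
  have msgs_c: "msgs c = {#}" using inv_active_no_msgs[OF I] eu wu by blast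
  have msgs': "msgs c' = {#(u,v)#}" using c' msgs_c by simp
  have uv: "(u,v) \<in> E" using inv_exploring[OF I eu] vt by (auto simp: nbrs_def)
  have loc_other: "\<And>x. x \<noteq> u \<Longrightarrow> loc c' x = loc c x" using c' by simp
  have loc_u: "loc c' u = (loc c u)\<lparr>todo := todo (loc c u) - {v}, wait := Some v\<rparr>"
    using c' by simp
  have unchanged: "st (loc c' x) = st (loc c x)"
    "par (loc c' x) = par (loc c x)"
    "cnt (loc c' x) = cnt (loc c x)"
    "chl (loc c' x) = chl (loc c x)"
    "dummy (loc c' x) = dummy (loc c x)" for x
    by (cases "x = u"; simp add: loc_other loc_u)+
  have wait_upd: "\<And>x. wait (loc c' x) = (if x = u then Some v else wait (loc c x))"
    using loc_other loc_u by simp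
  have todo_upd: "\<And>x. todo (loc c' x) = (if x = u then todo (loc c u) - {v} else todo (loc c x))"
    using loc_other loc_u by simp
  have behind_iff: "behind c' = behind c" by (rule ext) (simp add: behind_def unchanged)
  have synced_iff: "synced c' = synced c" by (rule ext) (simp add: synced_def unchanged)
  have child_iff: "tree_child c' = tree_child c" by (rule ext)+ (simp add: tree_child_def unchanged)
  have active_is_u: "\<And>x. st (loc c x) = EXPLORE \<Longrightarrow> wait (loc c x) = None \<Longrightarrow> x = u"
    using inv_active_unique[OF I] eu wu by blast
  have vne: "st (loc c v) \<noteq> EXPLORE"
    using active_target_not_exploring[OF I eu wu vt] .
  show ?thesis
    unfolding wave_inv_def behind_iff synced_iff child_iff unchanged
    apply (intro conjI)
    subgoal using inv_root_no_parent[OF I] .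
    subgoal using root_exploring[OF I eu] by simp
    subgoal using inv_reached_in_V[OF I] by blast
    subgoal using inv_parent_level[OF I] by blast
    subgoal using inv_low_levels_reached[OF I] by blast
    subgoal using inv_high_levels_INIT[OF I] by blast
    subgoal using inv_no_DONE[OF I] by blast
    subgoal using inv_chl_nbrs[OF I] by blast
    subgoal using inv_reached_status[OF I] by blast
    subgoal apply (intro allI impI) subgoal for x
      using inv_exploring[OF I, of x] wait_upd[of x] todo_upd[of x] uv by auto done
    subgoal apply (intro allI impI) subgoal for x w
      using inv_exploring_children[OF I, of x w] wait_upd[of x] todo_upd[of x] wu
      by (cases "x = u") auto done
    subgoal apply (intro allI impI) subgoal for x w
      using inv_exploring_visited_reached[OF I, of x w] wait_upd[of x] todo_upd[of x] wu
      by (cases "x = u") auto done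
    subgoal using inv_behind_child[OF I] by blast
    subgoal using inv_synced_child[OF I] by blast
    subgoal using inv_synced_nbr_reached[OF I] by blast
    subgoal apply (intro allI impI) subgoal premises prems for x
    proof -
      obtain p where p: "par (loc c x) = Some p" "st (loc c p) = EXPLORE" "wait (loc c p) = Some x"
        using inv_exploring_parent_waits[OF I, of x] prems by auto
      have "p \<noteq> u" using p wu by auto
      then show ?thesis using p wait_upd[of p] by auto
    qed done
    subgoal using inv_exploring_level_inj[OF I] by blast
    subgoal apply (intro allI impI) subgoal for x
      using active_is_u[of x] wait_upd[of x] by (auto split: if_splits) done
    subgoal apply (intro allI impI) subgoal for x w
      using active_is_u[of x] active_is_u[of w] wait_upd[of x] wait_upd[of w]
      by (auto split: if_splits) done
    subgoal
    proof -
      have "tree_child c u v \<Longrightarrow> behind c v"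
        using inv_exploring_children[OF I eu, of v] vt by blast
      then have "request_msg c' u v"
        using eu vne wait_upd[of u] by (auto simp: request_msg_def unchanged behind_iff child_iff)
      then show ?thesis using msgs' by blast
    qed
    done
qed

lemma wave_inv_explore_start:
  assumes I: "wave_inv c j" and s: "step n E r c (ExploreStart v u) c'"
  shows "wave_inv c' j"
proof -
  from s have m: "(v,u) \<in># msgs c" and iu: "st (loc c u) = IDLE" and pu: "par (loc c u) = Some v"
    and c': "c' = \<lparr> loc = (loc c)(u := (loc c u)\<lparr>st := EXPLORE, cnt := Suc (cnt (loc c u)),
                                      todo := nbrs E u - {v}, wait := None, dummy := False\<rparr>),
         msgs = msgs c - {#(v, u)#} \<rparr>"
    by (cases rule: step.cases; simp)+
  have msgs_c: "msgs c = {#(v, u)#}" and rq: "request_msg c v u" and ev: "st (loc c v) = EXPLORE"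
    and wv: "wait (loc c v) = Some u" and evu: "(v, u) \<in> E"
    using delivered_request[OF I m] iu by auto
  have fu: "behind c u" using rq iu pu unfolding request_msg_def tree_child_def by simp
  have vu: "v \<noteq> u" using edge_neq evu .
  have ur: "u \<noteq> r" using inv_root_no_parent[OF I] pu by auto
  have root_phase: "st (loc c r) = EXPLORE \<and> Suc j = cnt (loc c r) \<and> cnt (loc c r) \<le> n - 1"
    using root_exploring[OF I ev] .
  have du: "level u = Suc (level v)" using inv_parent_level[OF I ur] iu pu by auto
  have msgs': "msgs c' = {#}" using c' msgs_c by simp
  have loc_other: "\<And>x. x \<noteq> u \<Longrightarrow> loc c' x = loc c x" using c' by simp
  have loc_u: "loc c' u = (loc c u)\<lparr>st := EXPLORE, cnt := Suc (cnt (loc c u)),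
                                      todo := nbrs E u - {v}, wait := None, dummy := False\<rparr>" using c' by simp
  have loc_root: "loc c' r = loc c r" using loc_other ur by simp
  have unchanged: "par (loc c' x) = par (loc c x)"
    "chl (loc c' x) = chl (loc c x)" for x
    by (cases "x = u"; simp add: loc_other loc_u)+
  have st_upd: "\<And>x. st (loc c' x) = (if x = u then EXPLORE else st (loc c x))"
    using loc_other loc_u by simp
  have behind_iff: "\<And>x. behind c' x \<longleftrightarrow> behind c x \<and> x \<noteq> u"
  proof -
    fix x show "behind c' x \<longleftrightarrow> behind c x \<and> x \<noteq> u"
      by (cases "x = u") (use loc_u loc_root loc_other in \<open>simp_all add: behind_def\<close>)
  qed
  have synced_iff: "\<And>x. synced c' x \<longleftrightarrow> synced c x"
  proof -
    fix x show "synced c' x \<longleftrightarrow> synced c x"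
      
        by (cases "x = u")
        (use loc_u loc_root loc_other iu fu in \<open>simp_all add: synced_def behind_def\<close>)
  qed
  have child_iff: "\<And>x w. tree_child c' x w \<longleftrightarrow> tree_child c x w"
    unfolding tree_child_def using unchanged st_upd iu by auto
  have no_active: "\<And>x. st (loc c x) = EXPLORE \<Longrightarrow> wait (loc c x) = None \<Longrightarrow> False"
    using inv_active_no_msgs[OF I] msgs_c by auto
  have chu: "\<And>w. tree_child c u w \<Longrightarrow> w \<in> nbrs E u - {v}"
  proof -
    fix w assume cw: "tree_child c u w"
    have "w \<noteq> r" using cw inv_root_no_parent[OF I] by (auto simp: tree_child_def)
    then have "(w,u) \<in> E" "level w = Suc (level u)"
      using inv_parent_level[OF I, of w] cw by (auto simp: tree_child_def)
    then show "w \<in> nbrs E u - {v}" using du edge_sym by (auto simp: nbrs_def)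
  qed
  show ?thesis
    unfolding wave_inv_def unchanged
    apply (intro conjI)
    subgoal using inv_root_no_parent[OF I] .
    subgoal using root_phase loc_root by simp
    subgoal using inv_reached_in_V[OF I] st_upd edge_in_V evu by auto
    subgoal apply (intro allI impI) subgoal for x
      using inv_parent_level[OF I, of x] st_upd[of x] iu by (cases "x = u") auto done
    subgoal apply (intro ballI impI) subgoal for x
      using inv_low_levels_reached[OF I, of x] st_upd[of x] by auto done
    subgoal apply (intro ballI impI) subgoal for x
      using inv_high_levels_INIT[OF I, of x] st_upd[of x] loc_root iu by auto done
    subgoal apply (intro allI) subgoal for x using inv_no_DONE[OF I, of x] st_upd[of x] by auto done
    subgoal using inv_chl_nbrs[OF I] by blast
    subgoal apply (intro allI impI) subgoal for x
      using inv_reached_status[OF I, of x] st_upd[of x] behind_iff[of x] synced_iff[of x]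
      by (cases "x = u") auto done
    subgoal apply (intro allI impI) subgoal for x
      using inv_exploring[OF I, of x] st_upd[of x] loc_other[of x] loc_u loc_root fu pu
        by (cases "x = u") (auto simp: behind_def nbrs_def) done
    subgoal apply (intro allI impI) subgoal for x w
      proof (cases "x = u")
        case True
        assume a: "st (loc c' x) = EXPLORE" "tree_child c' x w"
        then have cw: "tree_child c u w" using child_iff True by simp
        then have wu: "w \<noteq> u" using pu vu by (auto simp: tree_child_def)
        have "behind c w" using inv_behind_child[OF I] fu cw by blast
        then show ?thesis using True chu[OF cw] loc_u behind_iff wu by auto
      next
        case False
        assume a: "st (loc c' x) = EXPLORE" "tree_child c' x w"
        then have ex: "st (loc c x) = EXPLORE" "tree_child c x w"
          using st_upd child_iff False by auto
        show ?thesis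
        proof (cases "w = u")
          case True
          then have "x = v" using ex(2) pu by (simp add: tree_child_def)
          then show ?thesis using True loc_other[OF False] wv inv_exploring[OF I ev] by auto
        next
          case False
          then show ?thesis
            using inv_exploring_children[OF I ex] loc_other[OF \<open>x \<noteq> u\<close>]
              behind_iff synced_iff
            by simp
        qed
      qed done
    subgoal apply (intro allI impI) subgoal for x w
      using inv_exploring_visited_reached[OF I, of x w] st_upd[of x] st_upd[of w]
        loc_other[of x] loc_u du
        by (cases "x = u") (auto simp: nbrs_def) done
    subgoal apply (intro allI impI) subgoal for x w
      using inv_behind_child[OF I, of x w] behind_iff[of x] behind_iff[of w] child_iff[of x w]
        ev pu
        by (auto simp: tree_child_def behind_def) done
    subgoal using inv_synced_child[OF I] synced_iff child_iff by blast
    subgoal apply (intro allI impI) subgoal for x w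
      using inv_synced_nbr_reached[OF I, of x w] synced_iff[of x] st_upd[of w] loc_root by auto done
    subgoal apply (intro allI impI) subgoal premises Q for x
      proof (cases "x = u")
        case True
        then show ?thesis using pu st_upd loc_other[OF vu] ev wv by auto
      next
        case False
        obtain p where p: "par (loc c x) = Some p" "st (loc c p) = EXPLORE" "wait (loc c p) = Some x"
          using inv_exploring_parent_waits[OF I, of x] Q st_upd False by auto
        have "p \<noteq> u" using p iu by auto
        then show ?thesis using p loc_other st_upd by auto
      qed done
    subgoal apply (intro allI impI) subgoal premises Q for x w
      proof -
        show ?thesis using Q awaited_child_level_unique[OF I ev wv du, of x]
            awaited_child_level_unique[OF I ev wv du, of w] inv_exploring_level_inj[OF I, of x w] st_upd[of x] st_upd[of w]
              by (auto split: if_splits)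
      qed done
    subgoal apply (intro allI impI) subgoal for x
      using no_active[of x] st_upd[of x] loc_other[of x] msgs' by (cases "x = u") auto done
    subgoal apply (intro allI impI) subgoal for x w
      using no_active[of x] no_active[of w] st_upd[of x] st_upd[of w] loc_other[of x]
        loc_other[of w]
        by (auto split: if_splits) done
    subgoal using msgs' by blast
    done
qed

lemma finish_step_facts:
  assumes I: "wave_inv c j" and s: "step n E r c (Finish u) c'"
  shows "st (loc c u) = EXPLORE" "wait (loc c u) = None" "todo (loc c u) = {}"
    "msgs c = {#}" "cnt (loc c u) \<noteq> n - 1"
    "c' = \<lparr> loc = (loc c)(u := (loc c u)\<lparr>st := IDLE\<rparr>),
         msgs = msgs c + (case par (loc c u) of None \<Rightarrow> {#} | Some p \<Rightarrow> {#(u, p)#}) \<rparr>"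
proof -
  from s have eu: "st (loc c u) = EXPLORE" and wu: "wait (loc c u) = None" and tu: "todo (loc c u) = {}"
    and dn: "dummy (loc c u) \<or> cnt (loc c u) \<noteq> n - 1"
    and c': "c' = \<lparr> loc = (loc c)(u := (loc c u)\<lparr>st := (if cnt (loc c u) = n - 1 then DONE else IDLE)\<rparr>),
         msgs = msgs c + (case par (loc c u) of None \<Rightarrow> {#} | Some p \<Rightarrow> {#(u, p)#}) \<rparr>"
    by (cases rule: step.cases; simp)+
  have cn: "cnt (loc c u) \<noteq> n - 1" using dn inv_exploring[OF I eu] by auto
  show "st (loc c u) = EXPLORE" "wait (loc c u) = None" "todo (loc c u) = {}" "cnt (loc c u) \<noteq> n - 1"
    using eu wu tu cn by auto
  show "msgs c = {#}" using inv_active_no_msgs[OF I] eu wu by blast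
  show "c' = \<lparr> loc = (loc c)(u := (loc c u)\<lparr>st := IDLE\<rparr>),
         msgs = msgs c + (case par (loc c u) of None \<Rightarrow> {#} | Some p \<Rightarrow> {#(u, p)#}) \<rparr>"
    using c' cn by simp
qed

lemma wave_inv_finish_nonroot:
  assumes I: "wave_inv c j" and s: "step n E r c (Finish u) c'" and ur: "u \<noteq> r"
  shows "wave_inv c' j"
proof -
  note finished = finish_step_facts[OF I s]
  have eu: "st (loc c u) = EXPLORE" and wu: "wait (loc c u) = None" and tu: "todo (loc c u) = {}"
    using finished by auto
  obtain p where p: "par (loc c u) = Some p" "st (loc c p) = EXPLORE" "wait (loc c p) = Some u"
    using inv_exploring_parent_waits[OF I ur eu] by blast
  have pu: "p \<noteq> u" using p wu by auto
  have msgs': "msgs c' = {#(u,p)#}" using finished(4,6) p by simp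
  have loc_other: "\<And>x. x \<noteq> u \<Longrightarrow> loc c' x = loc c x"
    using finished(6) by simp
  have loc_u: "loc c' u = (loc c u)\<lparr>st := IDLE\<rparr>" using finished(6) by simp
  have loc_root: "loc c' r = loc c r" using loc_other ur by simp
  have unchanged: "par (loc c' x) = par (loc c x)"
    "chl (loc c' x) = chl (loc c x)"
    "cnt (loc c' x) = cnt (loc c x)"
    "todo (loc c' x) = todo (loc c x)"
    "wait (loc c' x) = wait (loc c x)"
    "dummy (loc c' x) = dummy (loc c x)" for x
    by (cases "x = u"; simp add: loc_other loc_u)+
  have st_upd: "\<And>x. st (loc c' x) = (if x = u then IDLE else st (loc c x))"
    using loc_other loc_u by simp
  have du: "level u + cnt (loc c u) = cnt (loc c r)" using inv_exploring[OF I eu] by simp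
  have behind_iff: "\<And>x. behind c' x \<longleftrightarrow> behind c x"
  proof -
    fix x show "behind c' x \<longleftrightarrow> behind c x"
      
        by (cases "x = u")
        (use loc_u loc_root loc_other eu du in \<open>simp_all add: behind_def\<close>)
  qed
  have synced_iff: "\<And>x. synced c' x \<longleftrightarrow> (synced c x \<or> x = u)"
  proof -
    fix x show "synced c' x \<longleftrightarrow> (synced c x \<or> x = u)"
      
        by (cases "x = u")
        (use loc_u loc_root loc_other eu du in \<open>simp_all add: synced_def\<close>)
  qed
  have child_iff: "\<And>x w. tree_child c' x w \<longleftrightarrow> tree_child c x w"
    unfolding tree_child_def using unchanged st_upd eu by auto
  have active_is_u: "\<And>x. st (loc c x) = EXPLORE \<Longrightarrow> wait (loc c x) = None \<Longrightarrow> x = u"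
    using inv_active_unique[OF I] eu wu by blast
  show ?thesis
    unfolding wave_inv_def unchanged
    apply (intro conjI)
    subgoal using inv_root_no_parent[OF I] .
    subgoal using root_exploring[OF I eu] st_upd[of r] ur by simp
    subgoal apply (intro allI impI) subgoal for x
      using inv_reached_in_V[OF I, of x] st_upd[of x] inv_reached_in_V[OF I, of u] eu
      by (cases "x = u") auto done
    subgoal apply (intro allI impI) subgoal for x
      using inv_parent_level[OF I, of x] st_upd[of x] eu by (cases "x = u") auto done
    subgoal apply (intro ballI impI) subgoal for x
      using inv_low_levels_reached[OF I, of x] st_upd[of x] by auto done
    subgoal apply (intro ballI impI) subgoal for x
      using inv_high_levels_INIT[OF I, of x] st_upd[of x] eu by auto done
    subgoal apply (intro allI) subgoal for x using inv_no_DONE[OF I, of x] st_upd[of x] by auto done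
    subgoal using inv_chl_nbrs[OF I] by blast
    subgoal apply (intro allI impI) subgoal for x
      using inv_reached_status[OF I, of x] st_upd[of x] behind_iff[of x] synced_iff[of x]
      by (cases "x = u") auto done
    subgoal apply (intro allI impI) subgoal for x
      using inv_exploring[OF I, of x] st_upd[of x] by (cases "x = u") auto done
    subgoal apply (intro allI impI) subgoal for x w
      using inv_exploring_children[OF I, of x w] st_upd[of x] child_iff[of x w] behind_iff[of w]
        synced_iff[of w]
      by (cases "x = u") auto done
    subgoal apply (intro allI impI) subgoal for x w
      using inv_exploring_visited_reached[OF I, of x w] st_upd[of x] st_upd[of w]
      by (cases "x = u") auto done
    subgoal apply (intro allI impI) subgoal for x w
      using inv_behind_child[OF I, of x w] behind_iff[of x] behind_iff[of w] child_iff[of x w]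
      by auto done
    subgoal apply (intro allI impI) subgoal for x w
      using inv_synced_child[OF I, of x w] inv_exploring_children[OF I eu, of w]
        synced_iff[of x] synced_iff[of w] child_iff[of x w] tu wu
      by auto done
    subgoal apply (intro allI impI) subgoal for x w
      using inv_synced_nbr_reached[OF I, of x w] inv_exploring_visited_reached[OF I eu, of w]
        synced_iff[of x] st_upd[of w] tu wu
      by auto done
    subgoal apply (intro allI impI) subgoal premises Q for x
      proof -
        have xu: "x \<noteq> u" using Q(2) st_upd[of x] by auto
        obtain q where q: "par (loc c x) = Some q" "st (loc c q) = EXPLORE" "wait (loc c q) = Some x"
          using inv_exploring_parent_waits[OF I, of x] Q(1) Q(2) st_upd[of x] xu by auto
        have "q \<noteq> u" using q wu by auto
        then show ?thesis using q st_upd[of q] by auto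
      qed done
    subgoal apply (intro allI impI) subgoal for x w
      using inv_exploring_level_inj[OF I, of x w] st_upd[of x] st_upd[of w]
      by (auto split: if_splits) done
    subgoal apply (intro allI impI) subgoal for x
      using active_is_u[of x] st_upd[of x] by (auto split: if_splits) done
    subgoal apply (intro allI impI) subgoal for x w
      using active_is_u[of x] st_upd[of x] by (auto split: if_splits) done
    subgoal
      proof -
        have "reply_msg c' u p"
          using p pu st_upd[of p] st_upd[of u] synced_iff[of u]
          by (simp add: reply_msg_def unchanged)
        then show ?thesis using msgs' by blast
      qed
    done
qed

lemma wave_inv_finish_root:
  assumes I: "wave_inv c j" and s: "step n E r c (Finish r) c'"
  shows "wave_inv c' (Suc j)"
proof -
  note finished = finish_step_facts[OF I s]
  have eu: "st (loc c r) = EXPLORE" and wu: "wait (loc c r) = None" and tu: "todo (loc c r) = {}"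
    using finished by auto
  note synced_all = root_loop_synced[OF I eu wu tu]
    and reached_all = root_loop_reached[OF I eu wu tu]
  have root_phase: "Suc j = cnt (loc c r)" "cnt (loc c r) < n - 1"
    using root_exploring[OF I eu] finished(5) by auto
  have msgs': "msgs c' = {#}" using finished(4,6) inv_root_no_parent[OF I] by simp
  have loc_other: "\<And>x. x \<noteq> r \<Longrightarrow> loc c' x = loc c x"
    using finished(6) by simp
  have loc_r: "loc c' r = (loc c r)\<lparr>st := IDLE\<rparr>" using finished(6) by simp
  have unchanged: "par (loc c' x) = par (loc c x)"
    "chl (loc c' x) = chl (loc c x)"
    "cnt (loc c' x) = cnt (loc c x)"
    "todo (loc c' x) = todo (loc c x)"
    "wait (loc c' x) = wait (loc c x)"
    "dummy (loc c' x) = dummy (loc c x)" for x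
    by (cases "x = r"; simp add: loc_other loc_r)+
  have st_upd: "\<And>x. st (loc c' x) = (if x = r then IDLE else st (loc c x))"
    using loc_other loc_r by simp
  have synced_iff: "\<And>x. synced c' x \<longleftrightarrow> (synced c x \<or> x = r)"
  proof -
    fix x show "synced c' x \<longleftrightarrow> (synced c x \<or> x = r)"
      by (cases "x = r") (use loc_r loc_other in \<open>simp_all add: synced_def\<close>)
  qed
  have allfin: "\<And>x. st (loc c' x) \<noteq> INIT \<Longrightarrow> synced c' x"
    using synced_all synced_iff st_upd by (metis)
  have none_exploring: "\<And>x. st (loc c' x) \<noteq> EXPLORE"
  proof -
    fix x show "st (loc c' x) \<noteq> EXPLORE"
      using allfin[of x] unfolding synced_def by (cases "st (loc c' x)") auto
  qed
  have none_behind: "\<And>x. \<not> behind c' x"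
    using allfin unfolding synced_def behind_def by fastforce
  have child_iff: "\<And>x w. tree_child c' x w \<longleftrightarrow> tree_child c x w"
    unfolding tree_child_def using unchanged st_upd eu by auto
  show ?thesis
    unfolding wave_inv_def unchanged
    apply (intro conjI)
    subgoal using inv_root_no_parent[OF I] .
    subgoal using root_phase st_upd[of r] msgs' allfin by auto
    subgoal apply (intro allI impI) subgoal for x
      using inv_reached_in_V[OF I, of x] st_upd[of x] root_in_V by (cases "x = r") auto done
    subgoal apply (intro allI impI) subgoal for x
      using inv_parent_level[OF I, of x] st_upd[of x] by auto done
    subgoal apply (intro ballI impI) subgoal for x
      using reached_all[of x] root_phase st_upd[of x] by auto done
    subgoal apply (intro ballI impI) subgoal for x
      using inv_high_levels_INIT[OF I, of x] st_upd[of x] by auto done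
    subgoal apply (intro allI) subgoal for x using inv_no_DONE[OF I, of x] st_upd[of x] by auto done
    subgoal using inv_chl_nbrs[OF I] by blast
    subgoal apply (intro allI impI) subgoal for x using allfin[of x] by auto done
    subgoal using none_exploring by blast
    subgoal using none_exploring by blast
    subgoal using none_exploring by blast
    subgoal using none_behind by blast
    subgoal apply (intro allI impI) subgoal for x w
      using child_iff[of x w] synced_all[of w] synced_iff[of w] inv_root_no_parent[OF I]
      by (auto simp: tree_child_def) done
    subgoal apply (intro allI impI) subgoal for x w
      using reached_all[of w] edge_in_V[of x w] st_upd[of w] by auto done
    subgoal using none_exploring by blast
    subgoal using none_exploring by blast
    subgoal using none_exploring by blast
    subgoal using none_exploring by blast
    subgoal using msgs' by blast
    done
qed

lemma wave_inv_root_start: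
  assumes I: "wave_inv c j" and s: "step n E r c (RootStart x0) c'"
  shows "wave_inv c' j"
proof -
  from s have ir: "st (loc c r) = IDLE"
    and c': "c' = \<lparr> loc = (loc c)(r := (loc c r)\<lparr>st := EXPLORE, cnt := Suc (cnt (loc c r)),
                                      todo := nbrs E r, wait := None, dummy := False\<rparr>),
         msgs = msgs c \<rparr>"
    by (cases rule: step.cases; simp)+
  have root_idle: "j = cnt (loc c r)" "j < n - 1" "msgs c = {#}" "\<And>u. st (loc c u) \<noteq> INIT \<Longrightarrow> synced c u"
    using inv_root_phase[OF I] ir by auto
  have msgs': "msgs c' = {#}" using c' root_idle by simp
  have loc_other: "\<And>x. x \<noteq> r \<Longrightarrow> loc c' x = loc c x" using c' by simp
  have loc_r: "loc c' r = (loc c r)\<lparr>st := EXPLORE, cnt := Suc (cnt (loc c r)),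
                                      todo := nbrs E r, wait := None, dummy := False\<rparr>" using c' by simp
  have unchanged: "par (loc c' x) = par (loc c x)"
    "chl (loc c' x) = chl (loc c x)" for x
    by (cases "x = r"; simp add: loc_other loc_r)+
  have st_upd: "\<And>x. st (loc c' x) = (if x = r then EXPLORE else st (loc c x))"
    using loc_other loc_r by simp
  have none_exploring: "\<And>x. st (loc c x) \<noteq> EXPLORE"
  proof -
    fix x show "st (loc c x) \<noteq> EXPLORE"
      using root_idle(4)[of x] unfolding synced_def by (cases "st (loc c x)") auto
  qed
  have behind_iff: "\<And>x. behind c' x \<longleftrightarrow> (x \<noteq> r \<and> synced c x)"
  proof -
    fix x show "behind c' x \<longleftrightarrow> (x \<noteq> r \<and> synced c x)"
      by (cases "x = r") (use loc_r loc_other in \<open>simp_all add: behind_def synced_def\<close>)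
  qed
  have none_synced: "\<And>x. \<not> synced c' x"
  proof -
    fix x show "\<not> synced c' x"
    proof (cases "x = r")
      case True then show ?thesis using loc_r by (simp add: synced_def)
    next
      case False
      then show ?thesis using root_idle(4)[of x] loc_other[OF False] loc_r by (auto simp: synced_def)
    qed
  qed
  have child_iff: "\<And>x w. tree_child c' x w \<longleftrightarrow> tree_child c x w"
    unfolding tree_child_def using unchanged st_upd ir by auto
  show ?thesis
    unfolding wave_inv_def unchanged
    apply (intro conjI)
    subgoal using inv_root_no_parent[OF I] .
    subgoal using loc_r root_idle by auto
    subgoal apply (intro allI impI) subgoal for x
      using inv_reached_in_V[OF I, of x] st_upd[of x] root_in_V by (cases "x = r") auto done
    subgoal apply (intro allI impI) subgoal for x
      using inv_parent_level[OF I, of x] st_upd[of x] by auto done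
    subgoal apply (intro ballI impI) subgoal for x
      using inv_low_levels_reached[OF I, of x] st_upd[of x] by auto done
    subgoal apply (intro ballI impI) subgoal for x
      using inv_high_levels_INIT[OF I, of x] st_upd[of x] loc_r by auto done
    subgoal apply (intro allI) subgoal for x using inv_no_DONE[OF I, of x] st_upd[of x] by auto done
    subgoal using inv_chl_nbrs[OF I] by blast
    subgoal apply (intro allI impI) subgoal for x
      using root_idle(4)[of x] st_upd[of x] behind_iff[of x] by auto done
    subgoal apply (intro allI impI) subgoal for x
      using loc_r st_upd[of x] none_exploring[of x] inv_root_no_parent[OF I]
      by (cases "x = r") (auto simp: nbrs_def) done
    subgoal apply (intro allI impI) subgoal premises Q for x w
      proof -
        have xr: "x = r" using Q(1) st_upd[of x] none_exploring[of x] by (auto split: if_splits)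
        have cw: "tree_child c r w" using Q(2) child_iff xr by simp
        have wr: "w \<noteq> r" using cw inv_root_no_parent[OF I] by (auto simp: tree_child_def)
        have "(w,r) \<in> E" using inv_parent_level[OF I wr] cw by (auto simp: tree_child_def)
        then have wn: "w \<in> nbrs E r" using edge_sym by (auto simp: nbrs_def)
        have "behind c' w" using behind_iff[of w] wr root_idle(4)[of w] cw by (auto simp: tree_child_def)
        then show ?thesis using xr wn loc_r by auto
      qed done
    subgoal apply (intro allI impI) subgoal for x w
      using st_upd[of x] none_exploring[of x] loc_r by (auto simp: nbrs_def split: if_splits) done
    subgoal apply (intro allI impI) subgoal for x w
      using behind_iff[of x] behind_iff[of w] child_iff[of x w] inv_synced_child[OF I, of x w]
        inv_root_no_parent[OF I]
      by (auto simp: tree_child_def) done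
    subgoal using none_synced by blast
    subgoal using none_synced by blast
    subgoal apply (intro allI impI) subgoal for x using st_upd[of x] none_exploring[of x] by auto done
    subgoal apply (intro allI impI) subgoal for x w
      using st_upd[of x] st_upd[of w] none_exploring[of x] none_exploring[of w] by (auto split: if_splits) done
    subgoal using msgs' by blast
    subgoal apply (intro allI impI) subgoal for x w
      using st_upd[of x] st_upd[of w] none_exploring[of x] none_exploring[of w] by (auto split: if_splits) done
    subgoal using msgs' by blast
    done
qed

lemma complete_inv_start_dummy:
  assumes I: "wave_inv c j" and s: "step n E r c (StartDummy u) c'"
  shows "complete_inv c' j"
proof -
  from s have eu: "st (loc c u) = EXPLORE" and wu: "wait (loc c u) = None" and tu: "todo (loc c u) = {}"
    and cu: "cnt (loc c u) = n - 1"
    and c': "c' = \<lparr> loc = (loc c)(u := (loc c u)\<lparr>dummy := True, todo := chl (loc c u)\<rparr>),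
         msgs = msgs c \<rparr>"
    by (cases rule: step.cases; simp)+
  have root_phase: "st (loc c r) = EXPLORE" "Suc j = cnt (loc c r)" "cnt (loc c r) \<le> n - 1"
    using root_exploring[OF I eu] by auto
  txt \<open>Only the root can count to \<open>n - 1\<close>, as \<open>level u + cnt u = cnt r \<le> n - 1\<close>.\<close>
  have ur: "u = r"
  proof (rule ccontr)
    assume ur: "u \<noteq> r"
    have uV: "u \<in> V" using inv_reached_in_V[OF I] eu by auto
    have "level u \<noteq> 0" using level_0_root[OF uV] ur by auto
    then show False using inv_exploring[OF I eu] cu root_phase(3) two_nodes by auto
  qed
  note reached_all = root_loop_reached[OF I eu[unfolded ur] wu[unfolded ur] tu[unfolded ur]]
  have msgs_c: "msgs c = {#}" using inv_active_no_msgs[OF I] eu wu by blast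
  have loc_other: "\<And>x. x \<noteq> r \<Longrightarrow> loc c' x = loc c x" using c' ur by simp
  have loc_r: "loc c' r = (loc c r)\<lparr>dummy := True, todo := chl (loc c r)\<rparr>"
    using c' ur by simp
  have unchanged: "par (loc c' x) = par (loc c x)"
    "chl (loc c' x) = chl (loc c x)"
    "cnt (loc c' x) = cnt (loc c x)"
    "st (loc c' x) = st (loc c x)" for x
    by (cases "x = r"; simp add: loc_other loc_r)+
  have todo_upd: "\<And>x. todo (loc c' x) = (if x = r then chl (loc c r) else todo (loc c x))"
    using loc_other loc_r by simp
  show ?thesis
    unfolding complete_inv_def unchanged
    apply (intro conjI)
    subgoal using inv_root_no_parent[OF I] .
    subgoal using cu ur by simp
    subgoal using root_phase cu ur by simp
    subgoal using inv_reached_in_V[OF I] by blast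
    subgoal apply (intro ballI) subgoal for x
      using reached_all[of x] level_less_card[of x] cu ur by auto done
    subgoal using inv_parent_level[OF I] by blast
    subgoal apply (intro allI impI) subgoal for x
      using inv_exploring[OF I, of x] inv_chl_nbrs[OF I, of r] todo_upd[of x] by auto done
    subgoal using inv_chl_nbrs[OF I] by blast
    subgoal using c' msgs_c by simp
    done
qed

lemma complete_inv_step:
  assumes I: "complete_inv c j" and s: "step n E r c a c'"
  shows "complete_inv c' (if a = Finish r then Suc j else j)"
proof -
  note cinv = complete_invD[OF I]
  show ?thesis
  using s
  proof (cases rule: step.cases)
    case (set_parent v u)
    have "(v,u) \<in> E" using cinv_msgs_edges[OF I] set_parent by blast
    then have "u \<in> V" using edge_in_V by blast
    then show ?thesis using cinv_all_reached[OF I] set_parent by blast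
  next
    case (mark_sibling v u)
    have "(u, v) \<in> E" using cinv_msgs_edges[OF I] mark_sibling edge_sym by blast
    then have "\<forall>x. x \<in># msgs c' \<longrightarrow> x \<in> E"
      using mark_sibling cinv_msgs_edges[OF I] by (auto dest: in_diffD)
    moreover have "chl (loc c' x) \<subseteq> nbrs E x" for x
      using mark_sibling cinv_chl_nbrs[OF I, of x] by auto
    ultimately show ?thesis unfolding complete_inv_def using mark_sibling cinv
      by auto
  next
    case (explore_start v u)
    have ur: "u \<noteq> r" using cinv_root_no_parent[OF I] explore_start by auto
    show ?thesis unfolding complete_inv_def using explore_start cinv ur
      by (auto simp: nbrs_def dest: in_diffD)
  next
    case root_start
    then show ?thesis using cinv_root_phase[OF I] by auto
  next
    case (send_next u v)
    have "(u, v) \<in> E" using cinv_todo_nbrs[OF I] send_next by (auto simp: nbrs_def)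
    then have "\<forall>x. x \<in># msgs c' \<longrightarrow> x \<in> E"
      using send_next cinv_msgs_edges[OF I] by auto
    moreover have "todo (loc c' x) \<subseteq> nbrs E x" if "st (loc c' x) = EXPLORE" for x
      using send_next cinv_todo_nbrs[OF I, of x] that by (cases "x = u") auto
    ultimately show ?thesis unfolding complete_inv_def using send_next cinv
      by auto
  next
    case (recv_reply v u)
    show ?thesis unfolding complete_inv_def using recv_reply cinv
      by (auto simp: nbrs_def dest: in_diffD)
  next
    case (start_dummy u)
    show ?thesis unfolding complete_inv_def using start_dummy cinv
      by (auto simp: nbrs_def)
  next
    case (finish u)
    show ?thesis
    proof (cases "u = r")
      case True
      then show ?thesis unfolding complete_inv_def using finish cinv
        by (auto simp: nbrs_def)
    next
      case False
      obtain p where p: "par (loc c u) = Some p" "(u,p) \<in> E"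
        using cinv_parent_level[OF I False] finish by auto
      show ?thesis unfolding complete_inv_def using finish cinv False p
        by (auto simp: nbrs_def)
    qed
  qed
qed

lemma wave_inv_init: "wave_inv (init_config E r) 0"
  using two_nodes root_in_V level_0_root unfolding wave_inv_def init_config_def synced_def
      behind_def tree_child_def
  by (auto simp: nbrs_def)

lemma run_invariant: "run (card V) E r c j \<Longrightarrow> wave_inv c j \<or> complete_inv c j"
proof (induction rule: run.induct)
  case run_init
  then show ?case using wave_inv_init by blast
next
  case (run_step c j a c')
  show ?case
  proof (cases "complete_inv c j")
    case True
    then show ?thesis using complete_inv_step run_step.hyps(2) by blast
  next
    case False
    then have I: "wave_inv c j" using run_step.IH by blast
    note step = run_step.hyps(2)
    show ?thesis
    proof (cases a)
      case SetParent
      then show ?thesis using wave_inv_set_parent[OF I] step by simp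
    next
      case MarkSibling
      then show ?thesis using wave_inv_mark_sibling[OF I] step by simp
    next
      case ExploreStart
      then show ?thesis using wave_inv_explore_start[OF I] step by simp
    next
      case RootStart
      then show ?thesis using wave_inv_root_start[OF I] step by simp
    next
      case SendNext
      then show ?thesis using wave_inv_send_next[OF I] step by simp
    next
      case RecvReply
      then show ?thesis using wave_inv_recv_reply[OF I] step by simp
    next
      case StartDummy
      then show ?thesis using complete_inv_start_dummy[OF I] step by simp
    next
      case (Finish u)
      then show ?thesis
        using wave_inv_finish_root[OF I] wave_inv_finish_nonroot[OF I] step
        by (cases "u = r") simp_all
    qed
  qed
qed

lemma run_parent_level:
  assumes "run n E r c j" and "u \<noteq> r" and "st (loc c u) \<noteq> INIT"
  shows "\<exists>p. par (loc c u) = Some p \<and> (u, p) \<in> E \<and> Suc (level p) = level u"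
  using run_invariant[OF assms(1)] inv_parent_level cinv_parent_level assms(2,3) by blast

context
  fixes c :: "'v config" and k :: nat
  assumes k: "k \<ge> 1" and R: "run n E r c (k - 1)"
    and er: "st (loc c r) = EXPLORE" and wr: "wait (loc c r) = None" and tr: "todo (loc c r) = {}"
begin

lemma root_finish_level_reached: "u \<in> V \<Longrightarrow> level u = k \<Longrightarrow> st (loc c u) \<noteq> INIT"
proof (cases rule: disjE[OF run_invariant[OF R]])
  case 1
  then show "u \<in> V \<Longrightarrow> level u = k \<Longrightarrow> st (loc c u) \<noteq> INIT"
    using root_loop_reached[OF 1 er wr tr] root_exploring[OF 1 er] k by auto
qed (use cinv_all_reached in blast)

text \<open>After the dummy exploration has begun, \<open>k = n - 1\<close> bounds every distance.\<close>
lemma root_finish_beyond_INIT: "u \<in> V \<Longrightarrow> k < level u \<Longrightarrow> st (loc c u) = INIT"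
proof (cases rule: disjE[OF run_invariant[OF R]])
  case 1
  then show "u \<in> V \<Longrightarrow> k < level u \<Longrightarrow> st (loc c u) = INIT"
    using inv_high_levels_INIT[OF 1] root_exploring[OF 1 er] k by auto
next
  case 2
  then show "u \<in> V \<Longrightarrow> k < level u \<Longrightarrow> st (loc c u) = INIT"
    using cinv_root_phase[OF 2] er level_less_card k by fastforce
qed

end

lemma levels_after_root_finish:
  assumes k: "k \<ge> 1" and R: "run n E r c (k - 1)" and s: "step n E r c (Finish r) c'"
  shows "(\<forall>u\<in>V. level u = k \<longrightarrow>
             (\<exists>p. par (loc c' u) = Some p \<and> (u, p) \<in> E \<and> level p = k - 1)
             \<and> st (loc c' u) \<noteq> INIT)
       \<and> (\<forall>u\<in>V. level u > k \<longrightarrow> st (loc c' u) = INIT)"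
proof -
  from s have er: "st (loc c r) = EXPLORE" and wr: "wait (loc c r) = None"
    and tr: "todo (loc c r) = {}" and unchanged: "\<And>x. x \<noteq> r \<Longrightarrow> loc c' x = loc c x"
    by (cases rule: step.cases; simp)+
  have not_root: "level u \<ge> k \<Longrightarrow> u \<noteq> r" for u
    using k by auto
  show ?thesis
    using root_finish_level_reached[OF k R er wr tr] root_finish_beyond_INIT[OF k R er wr tr]
      run_parent_level[OF R] not_root unchanged
    by (metis diff_Suc_1 less_imp_le order_refl)
qed

end

theorem mainTheorem6:
  fixes V :: "'v set" and E :: "('v \<times> 'v) set" and r :: 'v
    and c c' :: "'v config" and k :: nat
  assumes "connected_graph V E"
    and "r \<in> V"
    and "k \<ge> 1"
    and "run (card V) E r c (k - 1)"
    and "step (card V) E r c (Finish r) c'"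
  shows "(\<forall>u\<in>V. graph_dist E r u = k \<longrightarrow>
             (\<exists>p. par (loc c' u) = Some p \<and> (u, p) \<in> E \<and> graph_dist E r p = k - 1)
             \<and> st (loc c' u) \<noteq> INIT)
       \<and> (\<forall>u\<in>V. graph_dist E r u > k \<longrightarrow> st (loc c' u) = INIT)"
proof (cases "2 \<le> card V")
  case True
  interpret bfs_run V E r
    using assms(1,2) True by unfold_locales auto
  show ?thesis using levels_after_root_finish[OF assms(3-5)] .
next
  case False
  interpret rooted_graph V E r
    using assms(1,2) by unfold_locales
  have "u = r" if "u \<in> V" for u
    using False card_le_Suc0_iff_eq[OF finite_V] that assms(2) by fastforce
  then have "graph_dist E r u = 0" if "u \<in> V" for u
    using that level_root by metis
  then show ?thesis using assms(3) by auto
qed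

end
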